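(* Let $p$ be a prime with $p\equiv1\pmod4$, let $K$ be a finite field of characteristic $p$ and order $q$, and let $s$ be a positive integer with $\gcd(s,q-1)=1$. Any $W_u$ ($u\in K$) lying in $\mathbb{Q}(\sqrt p)$ can be written uniquely as $(I+J\sqrt p)/2$ with $I,J\in\mathbb{Z}$; moreover $I\equiv J\pmod2$ and $v_p(I)\ge1$. If $s$ is nondegenerate over $K$, then $-q<-2(q-1)/(p-1)<I<2q$ and $|J|\le 2(q-1)/(p-1)<q$.
   Context: $\zeta=\exp(2\pi i/p)$, $\psi(x)=\zeta^{\mathrm{Tr}(x)}$ with $\mathrm{Tr}$ the absolute trace of $K$ to $\mathbb{F}_p$; $W_u=\sum_{x\in K}\psi(x^s-ux)$. $\sqrt p$ is the positive real square root. $v_p$ is the $p$-adic valuation on $\mathbb{Q}$ (with $v_p(0)=\infty$). The exponent $s$ is degenerate over $K$ if $s\equiv p^k\pmod{q-1}$ for some integer $k$, and nondegenerate otherwise. *)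

theory Defs
  imports "HOL-Analysis.Analysis" "HOL-Number_Theory.Number_Theory"
begin

definition field_degree :: "'a::{finite,field} itself \<Rightarrow> nat" where
  "field_degree _ = (THE n. CARD('a) = CHAR('a) ^ n)"

definition abs_trace :: "'a::{finite,field} \<Rightarrow> 'a" where
  "abs_trace x = (\<Sum>i<field_degree TYPE('a). x ^ (CHAR('a) ^ i))"

definition abs_trace_nat :: "'a::{finite,field} \<Rightarrow> nat" where
  "abs_trace_nat x = (THE k. k < CHAR('a) \<and> of_nat k = abs_trace x)"

definition psi :: "'a::{finite,field} \<Rightarrow> complex" where
  "psi x = exp (2 * of_real pi * \<i> * of_nat (abs_trace_nat x) / of_nat CHAR('a))"

definition weil_sum :: "nat \<Rightarrow> 'a::{finite,field} \<Rightarrow> complex" where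
  "weil_sum s u = (\<Sum>x\<in>UNIV. psi (x ^ s - u * x))"

definition degenerate :: "'a::{finite,field} itself \<Rightarrow> nat \<Rightarrow> bool" where
  "degenerate _ s = (\<exists>k. [s = CHAR('a) ^ k] (mod (CARD('a) - 1)))"

end

theory Submission
  imports Defs "HOL-Computational_Algebra.Polynomial_Factorial"
begin

(* Write N_c for the number of x in K with Tr(x^s - u x) = c, so that W_u is the sum of
   N_c zeta^c over c < p. Since p = 1 (mod 4), the quadratic Gauss sum G, the sum of
   chi(c) zeta^c, satisfies G^2 = p; hence sqrt p = +/- G, and W_u = a + b sqrt p becomes a
   rational linear relation among 1, zeta, ..., zeta^(p-1). As the cyclotomic polynomial
   Phi_p is irreducible (Eisenstein), the only such relations are the multiples of
   1 + zeta + ... + zeta^(p-1), so N_c takes a single value N_+ on the nonzero squares c and a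
   single value N_- on the nonsquares. Thus 2 W_u = (2 N_0 - N_+ - N_-) +/- (N_+ - N_-) sqrt p,
   and counting, q = N_0 + (p-1)(N_+ + N_-)/2, gives the parity, the divisibility by p and
   the bounds. For nondegenerate s, Tr(x^s - u x) agrees on K with a nonzero polynomial of
   degree less than q, so it does not vanish identically and N_0 < q. *)

section \<open>Eisenstein's criterion and the cyclotomic polynomial of prime index\<close>

lemma prime_elem_not_dvd_coeff_mult:
  fixes A B :: "'a::idom poly"
  assumes "prime_elem p"
    and "\<not> p dvd Polynomial.coeff A i" "\<And>k. k < i \<Longrightarrow> p dvd Polynomial.coeff A k"
    and "\<not> p dvd Polynomial.coeff B j" "\<And>k. k < j \<Longrightarrow> p dvd Polynomial.coeff B k"
  shows "\<not> p dvd Polynomial.coeff (A * B) (i + j)"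
proof -
  let ?a = "Polynomial.coeff A" and ?b = "Polynomial.coeff B"
  let ?rest = "\<Sum>k\<in>{..i + j} - {i}. ?a k * ?b (i + j - k)"
  have split: "Polynomial.coeff (A * B) (i + j) = ?a i * ?b j + ?rest"
    unfolding coeff_mult by (subst sum.remove[of _ i]) auto
  have "p dvd ?rest"
  proof (rule dvd_sum)
    fix k assume "k \<in> {..i + j} - {i}"
    then have "k < i \<or> i + j - k < j" by auto
    then show "p dvd ?a k * ?b (i + j - k)"
      using assms(3,5) by (meson dvd_mult dvd_mult2)
  qed
  moreover have "\<not> p dvd ?a i * ?b j"
    using assms(1,2,4) by (simp add: prime_elem_dvd_mult_iff)
  ultimately show ?thesis
    unfolding split using dvd_add_left_iff by blast
qed

lemma eisenstein_criterion:
  fixes A B :: "'a::idom poly"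
  assumes "prime_elem p"
    and low: "\<And>k. k < degree (A * B) \<Longrightarrow> p dvd Polynomial.coeff (A * B) k"
    and "\<not> p\<^sup>2 dvd Polynomial.coeff (A * B) 0"
    and "\<not> p dvd lead_coeff (A * B)"
  shows "degree A = 0 \<or> degree B = 0"
proof (rule ccontr)
  assume "\<not> (degree A = 0 \<or> degree B = 0)"
  then have nonconst: "degree A > 0" "degree B > 0" by auto
  have "A \<noteq> 0" "B \<noteq> 0" using assms(4) by auto
  have lead: "\<not> p dvd lead_coeff A" "\<not> p dvd lead_coeff B"
    using assms(4) by (auto simp: lead_coeff_mult)
  define i where "i = (LEAST i. \<not> p dvd Polynomial.coeff A i)"
  define j where "j = (LEAST j. \<not> p dvd Polynomial.coeff B j)"
  have i: "\<not> p dvd Polynomial.coeff A i" "i \<le> degree A"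
    unfolding i_def by (rule LeastI[of _ "degree A"] Least_le, rule lead)+
  have j: "\<not> p dvd Polynomial.coeff B j" "j \<le> degree B"
    unfolding j_def by (rule LeastI[of _ "degree B"] Least_le, rule lead)+
  have below_i: "p dvd Polynomial.coeff A k" if "k < i" for k
    using not_less_Least[OF that[unfolded i_def]] by simp
  have below_j: "p dvd Polynomial.coeff B k" if "k < j" for k
    using not_less_Least[OF that[unfolded j_def]] by simp
  have "\<not> p dvd Polynomial.coeff (A * B) (i + j)"
    using prime_elem_not_dvd_coeff_mult[OF assms(1) i(1) below_i j(1) below_j] .
  then have "\<not> i + j < degree A + degree B"
    using low \<open>A \<noteq> 0\<close> \<open>B \<noteq> 0\<close> by (auto simp: degree_mult_eq)
  then have "i = degree A" "j = degree B"
    using i(2) j(2) by linarith+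
  then have "p * p dvd Polynomial.coeff A 0 * Polynomial.coeff B 0"
    using below_i below_j nonconst by (simp add: mult_dvd_mono)
  then show False
    using assms(3) by (simp add: coeff_mult power2_eq_square)
qed

(* For prime p this is the cyclotomic polynomial Phi_p. *)
definition geom_poly :: "nat \<Rightarrow> int poly" where
  "geom_poly n = (\<Sum>i<n. Polynomial.monom 1 i)"

lemma coeff_geom_poly: "Polynomial.coeff (geom_poly n) k = (if k < n then 1 else 0)"
  by (simp add: geom_poly_def coeff_sum)

lemma degree_geom_poly: "degree (geom_poly n) = n - 1"
proof (cases n)
  case (Suc m)
  show ?thesis
  proof (rule antisym)
    show "degree (geom_poly n) \<le> n - 1"
      by (rule degree_le) (auto simp: coeff_geom_poly)
    show "n - 1 \<le> degree (geom_poly n)"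
      by (rule le_degree) (simp add: coeff_geom_poly Suc)
  qed
qed (simp add: geom_poly_def)

lemma geom_poly_mult_X_minus_1: "geom_poly n * [:-1, 1:] = Polynomial.monom 1 n - 1"
proof -
  have "geom_poly n = (\<Sum>i<n. [:0, 1:] ^ i)"
    by (simp add: geom_poly_def monom_altdef)
  moreover have "[:-1, 1:] = [:0, 1:] - (1 :: int poly)"
    by (simp add: one_pCons)
  ultimately show ?thesis
    by (simp add: power_diff_1_eq mult.commute monom_altdef)
qed

lemma coeff_geom_poly_shifted:
  "Polynomial.coeff (pcompose (geom_poly n) [:1, 1:]) k = int (n choose Suc k)"
proof -
  have X: "pcompose (Polynomial.monom 1 n) [:1, 1:] = [:1, 1:] ^ n"
    by (simp add: pcompose_altdef map_poly_monom poly_monom)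
  have "pcompose [:-1, 1:] [:1, 1 :: int:] = [:0, 1:]"
    by (simp add: pcompose_pCons)
  with arg_cong[OF geom_poly_mult_X_minus_1, of "\<lambda>P. pcompose P [:1, 1:]"]
  have "pcompose (geom_poly n) [:1, 1:] * [:0, 1:] = [:1, 1:] ^ n - 1"
    by (simp only: pcompose_mult pcompose_diff X pcompose_1)
  from arg_cong[OF this, of "\<lambda>P. Polynomial.coeff P (Suc k)"] show ?thesis
    by (cases "Suc k \<le> n") (simp_all add: coeff_linear_poly_power binomial_eq_0 coeff_eq_0 degree_linear_power)
qed

lemma geom_poly_prime_factor_degree_0:
  assumes "prime p" and "geom_poly p = A * B"
  shows "degree A = 0 \<or> degree B = 0"
proof -
  let ?shift = "\<lambda>P :: int poly. pcompose P [:1, 1:]"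
  have p: "p \<ge> 2" using assms(1) prime_ge_2_nat by blast
  have prod: "?shift A * ?shift B = ?shift (geom_poly p)"
    by (simp add: assms(2) pcompose_mult)
  have deg: "degree (?shift A * ?shift B) = p - 1"
    unfolding prod by (simp add: degree_pcompose degree_geom_poly)
  have "degree (?shift A) = 0 \<or> degree (?shift B) = 0"
  proof (rule eisenstein_criterion[of "int p"])
    show "prime_elem (int p)" using assms(1) by simp
    show "int p dvd Polynomial.coeff (?shift A * ?shift B) k"
      if "k < degree (?shift A * ?shift B)" for k
    proof -
      have "Suc k < p" using that deg by linarith
      then show ?thesis
        using assms(1) unfolding prod coeff_geom_poly_shifted by (simp add: dvd_choose_prime)
    qed
    show "\<not> (int p)\<^sup>2 dvd Polynomial.coeff (?shift A * ?shift B) 0"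
      using p unfolding prod coeff_geom_poly_shifted by (simp add: power2_eq_square)
    show "\<not> int p dvd lead_coeff (?shift A * ?shift B)"
      using p unfolding deg unfolding prod coeff_geom_poly_shifted by simp
  qed
  then show ?thesis by (simp add: degree_pcompose)
qed

section \<open>Integer relations among roots of unity of prime order\<close>

lemma map_poly_of_int_add:
  "map_poly (of_int :: int \<Rightarrow> 'a::comm_ring_1) (A + B) = map_poly of_int A + map_poly of_int B"
  by (rule poly_eqI) (simp add: coeff_map_poly)

lemma map_poly_of_int_mult:
  "map_poly (of_int :: int \<Rightarrow> 'a::comm_ring_1) (A * B) = map_poly of_int A * map_poly of_int B"
  by (induction A) (simp_all add: map_poly_of_int_add map_poly_smult map_poly_pCons)

lemma poly_of_int_geom_poly:
  "poly (map_poly (of_int :: int \<Rightarrow> 'a::comm_ring_1) (geom_poly n)) z = (\<Sum>i<n. z ^ i)"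
proof -
  have "map_poly (of_int :: int \<Rightarrow> 'a) (geom_poly n) = (\<Sum>i<n. Polynomial.monom 1 i)"
    by (rule poly_eqI) (simp add: coeff_map_poly coeff_geom_poly coeff_sum)
  then show ?thesis by (simp add: poly_sum poly_monom)
qed

lemma sum_powers_root_of_unity:
  fixes z :: "'a::idom"
  assumes "z ^ n = 1" and "z \<noteq> 1"
  shows "(\<Sum>i<n. z ^ i) = 0"
proof -
  have "(z - 1) * (\<Sum>i<n. z ^ i) = 0"
    using assms(1) by (simp flip: power_diff_1_eq)
  then show ?thesis using assms(2) by simp
qed

lemma primitive_part_dvd_if_minimal_root:
  fixes M F :: "int poly" and z :: "'a::comm_ring_1"
  assumes "M \<noteq> 0" and M: "poly (map_poly of_int M) z = 0"
    and minimal: "\<And>N. N \<noteq> 0 \<Longrightarrow> poly (map_poly of_int N) z = 0 \<Longrightarrow> degree M \<le> degree N"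
    and F: "poly (map_poly of_int F) z = 0"
  shows "primitive_part M dvd F"
proof -
  obtain a Q where "a \<noteq> 0" and div: "Polynomial.smult a F = M * Q + pseudo_mod F M"
    using pseudo_mod(1)[OF \<open>M \<noteq> 0\<close>] by blast
  have "poly (map_poly of_int (pseudo_mod F M)) z = 0"
    using arg_cong[OF div, of "\<lambda>P. poly (map_poly (of_int :: int \<Rightarrow> 'a) P) z"] M F
    by (simp add: map_poly_of_int_add map_poly_of_int_mult map_poly_smult)
  then have "pseudo_mod F M = 0"
    using minimal pseudo_mod(2)[OF \<open>M \<noteq> 0\<close>, of F] by fastforce
  moreover have "primitive_part M dvd M"
    by (metis content_times_primitive_part dvd_smult dvd_refl)
  ultimately have "primitive_part M dvd Polynomial.smult a F"
    using div by simp
  then have "fract_poly (primitive_part M) dvd Polynomial.smult (to_fract a) (fract_poly F)"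
    by (metis fract_poly_dvd fract_poly_smult)
  then have "fract_poly (primitive_part M) dvd fract_poly F"
    using \<open>a \<noteq> 0\<close> by (simp add: dvd_smult_cancel)
  then show ?thesis
    by (rule fract_poly_dvdD) (simp add: \<open>M \<noteq> 0\<close>)
qed

lemma degree_int_poly_root_of_unity:
  fixes R :: "int poly" and z :: "'a::{idom,ring_char_0}"
  assumes "prime p" "z ^ p = 1" "z \<noteq> 1" "R \<noteq> 0" "poly (map_poly of_int R) z = 0"
  shows "p - 1 \<le> degree R"
proof -
  let ?root = "\<lambda>N :: int poly. N \<noteq> 0 \<and> poly (map_poly of_int N) z = 0"
  obtain M where M: "?root M" and minimal: "\<And>N. ?root N \<Longrightarrow> degree M \<le> degree N"
    using ex_has_least_nat[of ?root R degree] assms(4,5) by blast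
  have "poly (map_poly of_int (geom_poly p)) z = 0"
    using assms(2,3) by (simp add: poly_of_int_geom_poly sum_powers_root_of_unity)
  then have "primitive_part M dvd geom_poly p"
    using primitive_part_dvd_if_minimal_root M minimal by blast
  then obtain Q where Q: "geom_poly p = primitive_part M * Q" ..
  have "degree M \<noteq> 0"
  proof
    assume "degree M = 0"
    then obtain c where "M = [:c:]" by (rule degree_eq_zeroE)
    then show False using M by (simp add: map_poly_pCons)
  qed
  then have "degree Q = 0"
    using geom_poly_prime_factor_degree_0[OF assms(1) Q] by simp
  moreover have "geom_poly p \<noteq> 0"
    using coeff_geom_poly[of p 0] prime_gt_0_nat[OF assms(1)] by auto
  ultimately have "degree M = p - 1"
    using Q by (metis degree_geom_poly degree_mult_eq degree_primitive_part add_0_right mult_eq_0_iff)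
  then show ?thesis using minimal[of R] assms(4,5) by simp
qed

lemma int_relation_root_of_unity:
  fixes f :: "nat \<Rightarrow> int" and z :: "'a::{idom,ring_char_0}"
  assumes "prime p" "z ^ p = 1" "z \<noteq> 1"
    and relation: "(\<Sum>c<p. of_int (f c) * z ^ c) = 0" and "c < p"
  shows "f c = f 0"
proof -
  have p: "p \<ge> 2" using assms(1) prime_ge_2_nat by blast
  define R where "R = (\<Sum>c<p. Polynomial.monom (f c - f (p - 1)) c)"
  have coeff_R: "Polynomial.coeff R c = (if c < p then f c - f (p - 1) else 0)" for c
    unfolding R_def by (simp add: coeff_sum)
  have "poly (map_poly of_int R) z = (\<Sum>c<p. of_int (f c) * z ^ c) - of_int (f (p - 1)) * (\<Sum>c<p. z ^ c)"
  proof -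
    have "map_poly (of_int :: int \<Rightarrow> 'a) R = (\<Sum>c<p. Polynomial.monom (of_int (f c - f (p - 1))) c)"
      by (rule poly_eqI) (simp add: coeff_map_poly coeff_R coeff_sum)
    then show ?thesis
      by (simp add: poly_sum poly_monom left_diff_distrib sum_subtractf sum_distrib_left)
  qed
  also have "\<dots> = 0"
    using relation assms(2,3) by (simp add: sum_powers_root_of_unity)
  finally have "poly (map_poly of_int R) z = 0" .
  moreover have "degree R < p - 1"
  proof -
    have "Polynomial.coeff R i = 0" if "p - 2 < i" for i
      using coeff_R[of i] p that by (cases "i = p - 1") auto
    then have "degree R \<le> p - 2"
      by (simp add: degree_le)
    then show ?thesis using p by linarith
  qed
  ultimately have "R = 0"
    using degree_int_poly_root_of_unity[OF assms(1-3)] by fastforce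
  then have same: "f c' = f (p - 1)" if "c' < p" for c'
    using coeff_R[of c'] that by simp
  show ?thesis
    using same[OF assms(5)] same[of 0] p by simp
qed

lemma rat_relation_root_of_unity:
  fixes f :: "nat \<Rightarrow> rat" and z :: "'a::field_char_0"
  assumes "prime p" "z ^ p = 1" "z \<noteq> 1"
    and relation: "(\<Sum>c<p. of_rat (f c) * z ^ c) = 0" and "c < p"
  shows "f c = f 0"
proof -
  define D where "D = (\<Prod>c<p. snd (quotient_of (f c)))"
  have "D > 0"
    unfolding D_def by (intro prod_pos) (simp add: quotient_of_denom_pos')
  have integral: "of_int D * f c \<in> \<int>" if "c < p" for c
  proof -
    obtain n d where nd: "quotient_of (f c) = (n, d)" by fastforce
    have "D = d * (\<Prod>c'\<in>{..<p} - {c}. snd (quotient_of (f c')))"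
      unfolding D_def using that nd by (simp add: prod.remove)
    then show ?thesis
      using quotient_of_div[OF nd] quotient_of_denom_pos[OF nd] by (simp add: Ints_prod)
  qed
  define g where "g c = \<lfloor>of_int D * f c\<rfloor>" for c
  have g: "of_int (g c) = of_int D * f c" if "c < p" for c
    using integral[OF that] unfolding g_def by (auto elim: Ints_cases)
  have "of_int (g c) * z ^ c = of_int D * (of_rat (f c) * z ^ c)" if "c < p" for c
    using arg_cong[OF g[OF that], of "of_rat :: rat \<Rightarrow> 'a"] by (simp add: of_rat_mult)
  then have "(\<Sum>c<p. of_int (g c) * z ^ c) = of_int D * (\<Sum>c<p. of_rat (f c) * z ^ c)"
    unfolding sum_distrib_left by (intro sum.cong) auto
  then have "g c = g 0"
    using int_relation_root_of_unity[OF assms(1-3)] relation assms(5) by simp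
  then show ?thesis
    using g[OF assms(5)] g[of 0] prime_gt_0_nat[OF assms(1)] \<open>D > 0\<close> by auto
qed

section \<open>The quadratic character and the quadratic Gauss sum\<close>

definition quadratic_char :: "nat \<Rightarrow> nat \<Rightarrow> int" where
  "quadratic_char p a = Legendre (int a) (int p)"

lemma quadratic_char_cases: "quadratic_char p a \<in> {-1, 0, 1}"
  by (auto simp: quadratic_char_def Legendre_def)

lemma quadratic_char_eq_0_iff: "quadratic_char p a = 0 \<longleftrightarrow> p dvd a"
  by (auto simp: quadratic_char_def Legendre_def cong_0_iff)

lemma quadratic_char_mod: "quadratic_char p (a mod p) = quadratic_char p a"
proof -
  have mod: "[int (a mod p) = int a] (mod int p)"
    by (simp add: cong_def zmod_int)
  then have "[int (a mod p) = 0] (mod int p) \<longleftrightarrow> [int a = 0] (mod int p)"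
    by (meson cong_sym cong_trans)
  moreover have "QuadRes (int p) (int (a mod p)) \<longleftrightarrow> QuadRes (int p) (int a)"
    unfolding QuadRes_def using mod by (meson cong_sym cong_trans)
  ultimately show ?thesis
    by (simp add: quadratic_char_def Legendre_def)
qed

lemma quadratic_char_1:
  assumes "prime p"
  shows "quadratic_char p 1 = 1"
proof -
  have "QuadRes (int p) 1"
    unfolding QuadRes_def by (rule exI[of _ 1]) simp
  moreover have "\<not> [1 = 0] (mod int p)"
    using prime_gt_1_nat[OF assms] by (simp add: cong_0_iff)
  ultimately show ?thesis
    by (simp add: quadratic_char_def Legendre_def)
qed

lemma cong_sign_eq:
  fixes x y :: int
  assumes "p > 2" and "[x = y] (mod int p)" and "x \<in> {-1, 0, 1}" and "y \<in> {-1, 0, 1}"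
  shows "x = y"
proof -
  have "int p dvd x - y" using assms(2) by (simp add: cong_iff_dvd_diff)
  moreover have "\<bar>x - y\<bar> < int p" using assms(1,3,4) by auto
  ultimately show ?thesis using dvd_imp_le_int[of "x - y" "int p"] by (cases "x = y") auto
qed

context
  fixes p :: nat
  assumes p_prime: "prime p" and p_gt_2: "p > 2"
begin

lemma quadratic_char_euler: "[quadratic_char p a = int a ^ ((p - 1) div 2)] (mod int p)"
  unfolding quadratic_char_def using euler_criterion[OF p_prime p_gt_2] .

lemma quadratic_char_mult: "quadratic_char p (a * b) = quadratic_char p a * quadratic_char p b"
proof (rule cong_sign_eq[OF p_gt_2])
  have "[quadratic_char p a * quadratic_char p b = int a ^ ((p - 1) div 2) * int b ^ ((p - 1) div 2)] (mod int p)"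
    by (intro cong_mult quadratic_char_euler)
  then show "[quadratic_char p (a * b) = quadratic_char p a * quadratic_char p b] (mod int p)"
    using quadratic_char_euler[of "a * b"] by (simp add: power_mult_distrib) (meson cong_sym cong_trans)
  show "quadratic_char p a * quadratic_char p b \<in> {-1, 0, 1}"
    using quadratic_char_cases[of p a] quadratic_char_cases[of p b] by auto
qed (rule quadratic_char_cases)

lemma quadratic_char_minus_1:
  assumes "p mod 4 = 1"
  shows "quadratic_char p (p - 1) = 1"
proof (rule cong_sign_eq[OF p_gt_2])
  have "even ((p - 1) div 2)"
    using assms by presburger
  moreover have "[int (p - 1) = -1] (mod int p)"
    using p_gt_2 by (simp add: cong_iff_dvd_diff of_nat_diff)
  ultimately have "[int (p - 1) ^ ((p - 1) div 2) = 1] (mod int p)"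
    by (metis cong_pow neg_one_even_power)
  then show "[quadratic_char p (p - 1) = 1] (mod int p)"
    using quadratic_char_euler cong_trans by blast
qed (use quadratic_char_cases in auto)

lemma exists_quadratic_nonresidue: "\<exists>g<p. quadratic_char p g = -1"
proof -
  obtain g where g: "residue_primroot p g"
    using prime_primitive_root_exists[OF prime_gt_1_nat[OF p_prime] p_prime] by blast
  then have ord: "ord p g = p - 1" and "coprime p g"
    using p_prime by (simp_all add: residue_primroot_def totient_prime)
  then have "\<not> p dvd g"
    using p_prime by (meson coprime_common_divisor dvd_refl not_prime_unit)
  then have "quadratic_char p g \<noteq> 0"
    by (simp add: quadratic_char_eq_0_iff)
  moreover have "quadratic_char p g \<noteq> 1"
  proof
    assume "quadratic_char p g = 1"
    then have "[g ^ ((p - 1) div 2) = 1] (mod p)"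
      using quadratic_char_euler[of g] by (metis cong_int_iff cong_sym of_nat_1 of_nat_power)
    then have "ord p g dvd (p - 1) div 2"
      by (simp add: ord_divides')
    then show False
      unfolding ord
      using p_gt_2 by (auto dest: dvd_imp_le)
  qed
  ultimately have "quadratic_char p (g mod p) = -1"
    using quadratic_char_cases[of p g] by (simp add: quadratic_char_mod)
  moreover have "g mod p < p"
    using prime_gt_0_nat[OF p_prime] by simp
  ultimately show ?thesis by blast
qed

lemma bij_betw_mult_mod:
  assumes "\<not> p dvd g"
  shows "bij_betw (\<lambda>a. g * a mod p) {..<p} {..<p}"
proof -
  have "coprime g p"
    using assms p_prime prime_imp_coprime coprime_commute by blast
  have "inj_on (\<lambda>a. g * a mod p) {..<p}"
  proof (rule inj_onI)
    fix a b assume "a \<in> {..<p}" "b \<in> {..<p}" "g * a mod p = g * b mod p"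
    then have "[a = b] (mod p)"
      using \<open>coprime g p\<close> by (metis cong_def cong_mult_lcancel_nat)
    then show "a = b"
      using \<open>a \<in> {..<p}\<close> \<open>b \<in> {..<p}\<close> by (simp add: cong_def)
  qed
  moreover have "(\<lambda>a. g * a mod p) ` {..<p} \<subseteq> {..<p}"
    using prime_gt_0_nat[OF p_prime] by auto
  ultimately show ?thesis
    by (simp add: bij_betw_def endo_inj_surj)
qed

lemma sum_quadratic_char: "(\<Sum>a<p. quadratic_char p a) = 0"
proof -
  obtain g where g: "g < p" "quadratic_char p g = -1"
    using exists_quadratic_nonresidue by blast
  then have "\<not> p dvd g"
    using quadratic_char_eq_0_iff[of p g] by auto
  have "(\<Sum>a<p. quadratic_char p a) = (\<Sum>a<p. quadratic_char p (g * a mod p))"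
    using sum.reindex_bij_betw[OF bij_betw_mult_mod[OF \<open>\<not> p dvd g\<close>], of "quadratic_char p"]
    by simp
  also have "\<dots> = - (\<Sum>a<p. quadratic_char p a)"
    by (simp add: quadratic_char_mod quadratic_char_mult g sum_negf)
  finally show ?thesis by simp
qed

end

lemma sum_quadratic_char_units:
  assumes "prime p" and "p > 2"
  shows "(\<Sum>c\<in>{1..<p}. quadratic_char p c) = 0"
proof -
  have "(\<Sum>c<p. quadratic_char p c) = quadratic_char p 0 + (\<Sum>c\<in>{1..<p}. quadratic_char p c)"
    using assms(2) by (simp add: lessThan_atLeast0 sum.atLeast_Suc_lessThan)
  then show ?thesis
    using sum_quadratic_char[OF assms] quadratic_char_eq_0_iff[of p 0] by simp
qed

locale prime_root_of_unity =
  fixes p :: nat and z :: "'a::field_char_0"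
  assumes prime_p: "prime p" and pow_eq_1_iff: "z ^ k = 1 \<longleftrightarrow> p dvd k"
begin

lemma pow_p_eq_1: "z ^ p = 1"
  by (simp add: pow_eq_1_iff)

lemma ne_1: "z \<noteq> 1"
  using pow_eq_1_iff[of 1] prime_p by auto

lemma pow_mod: "z ^ (k mod p) = z ^ k"
proof -
  have "z ^ k = z ^ (p * (k div p) + k mod p)"
    by simp
  also have "\<dots> = (z ^ p) ^ (k div p) * z ^ (k mod p)"
    by (simp only: power_add power_mult)
  finally show ?thesis by (simp add: pow_p_eq_1)
qed

lemma pow_cong: "k mod p = l mod p \<Longrightarrow> z ^ k = z ^ l"
  by (metis pow_mod)

lemma sum_pow_mult: "(\<Sum>a<p. z ^ (a * m)) = (if p dvd m then of_nat p else 0)"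
proof (cases "p dvd m")
  case True
  then have "z ^ (a * m) = 1" for a
    by (simp add: pow_eq_1_iff)
  then show ?thesis using True by simp
next
  case False
  then have "z ^ m \<noteq> 1" by (simp add: pow_eq_1_iff)
  moreover have "(z ^ m) ^ p = 1"
    by (simp add: pow_eq_1_iff flip: power_mult)
  ultimately have "(\<Sum>a<p. (z ^ m) ^ a) = 0"
    by (rule sum_powers_root_of_unity[rotated])
  then show ?thesis
    using False by (simp add: mult.commute flip: power_mult)
qed

definition gauss_sum :: 'a where
  "gauss_sum = (\<Sum>a<p. of_int (quadratic_char p a) * z ^ a)"

lemma gauss_sum_row_substitution:
  assumes "p > 2" and "a < p"
  shows "(\<Sum>b<p. of_int (quadratic_char p a * quadratic_char p b) * z ^ (a + b))
       = (\<Sum>t<p. of_int (quadratic_char p t) * z ^ (a * (1 + t)))"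
proof (cases "a = 0")
  case True
  then show ?thesis
    using sum_quadratic_char[OF prime_p assms(1)] quadratic_char_eq_0_iff[of p 0]
    by (simp flip: of_int_sum)
next
  case False
  then have "\<not> p dvd a" using assms(2) by (auto dest: dvd_imp_le)
  then have unit: "quadratic_char p a * quadratic_char p a = 1"
    using quadratic_char_cases[of p a] quadratic_char_eq_0_iff[of p a] by auto
  have "(\<Sum>b<p. of_int (quadratic_char p a * quadratic_char p b) * z ^ (a + b))
      = (\<Sum>t<p. of_int (quadratic_char p a * quadratic_char p (a * t mod p)) * z ^ (a + a * t mod p))"
    using sum.reindex_bij_betw[OF bij_betw_mult_mod[OF prime_p assms(1) \<open>\<not> p dvd a\<close>],
        of "\<lambda>b. of_int (quadratic_char p a * quadratic_char p b) * z ^ (a + b)"]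
    by simp
  also have "\<dots> = (\<Sum>t<p. of_int (quadratic_char p t) * z ^ (a * (1 + t)))"
  proof (intro sum.cong refl)
    fix t
    have "quadratic_char p a * quadratic_char p (a * t mod p) = quadratic_char p t"
      by (simp add: quadratic_char_mod quadratic_char_mult[OF prime_p assms(1)] unit
          flip: mult.assoc)
    moreover have "z ^ (a + a * t mod p) = z ^ (a * (1 + t))"
      by (rule pow_cong) (simp add: mod_add_right_eq distrib_left)
    ultimately show "of_int (quadratic_char p a * quadratic_char p (a * t mod p)) * z ^ (a + a * t mod p)
        = of_int (quadratic_char p t) * z ^ (a * (1 + t))"
      by simp
  qed
  finally show ?thesis .
qed

lemma gauss_sum_squared:
  assumes "p mod 4 = 1"
  shows "gauss_sum\<^sup>2 = of_nat p"
proof -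
  have p_gt_2: "p > 2"
    using assms prime_ge_2_nat[OF prime_p] by (cases "p = 2") auto
  have p_dvd_iff: "p dvd 1 + t \<longleftrightarrow> t = p - 1" if "t < p" for t
    using that p_gt_2 by (auto dest: dvd_imp_le)
  have "gauss_sum\<^sup>2 = (\<Sum>a<p. \<Sum>b<p. of_int (quadratic_char p a * quadratic_char p b) * z ^ (a + b))"
    unfolding gauss_sum_def power2_eq_square sum_product by (simp add: power_add mult_ac)
  also have "\<dots> = (\<Sum>a<p. \<Sum>t<p. of_int (quadratic_char p t) * z ^ (a * (1 + t)))"
    using gauss_sum_row_substitution[OF p_gt_2] by simp
  also have "\<dots> = (\<Sum>t<p. of_int (quadratic_char p t) * (\<Sum>a<p. z ^ (a * (1 + t))))"
    by (subst sum.swap) (simp add: sum_distrib_left)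
  also have "\<dots> = (\<Sum>t<p. if t = p - 1 then of_int (quadratic_char p t) * of_nat p else 0)"
  proof (intro sum.cong refl)
    fix t assume "t \<in> {..<p}"
    then show "of_int (quadratic_char p t) * (\<Sum>a<p. z ^ (a * (1 + t)))
        = (if t = p - 1 then of_int (quadratic_char p t) * of_nat p else 0)"
      unfolding sum_pow_mult using p_dvd_iff[of t] by simp
  qed
  also have "\<dots> = of_nat p"
    using p_gt_2 quadratic_char_minus_1[OF prime_p p_gt_2 assms] by simp
  finally show ?thesis .
qed

lemma count_eq_affine_quadratic_char:
  fixes N :: "nat \<Rightarrow> nat" and a b :: rat and r :: 'a
  assumes "p mod 4 = 1" and "r\<^sup>2 = of_nat p"
    and sum_eq: "(\<Sum>c<p. of_nat (N c) * z ^ c) = of_rat a + of_rat b * r"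
  obtains e :: int where "e = 1 \<or> e = -1"
    and "\<And>c. 0 < c \<Longrightarrow> c < p \<Longrightarrow>
           of_nat (N c) = of_nat (N 0) - a + of_int e * b * of_int (quadratic_char p c)"
proof -
  have "(r - gauss_sum) * (r + gauss_sum) = 0"
    using assms(2) gauss_sum_squared[OF assms(1)] by (simp add: algebra_simps power2_eq_square)
  then obtain e :: int where e: "e = 1 \<or> e = -1" and r: "r = of_int e * gauss_sum"
    by (metis add_eq_0_iff2 eq_iff_diff_eq_0 mult_eq_0_iff mult_minus1 of_int_1 of_int_minus mult_1)
  define f where "f c = of_nat (N c) - (if c = 0 then a else 0)
      - of_int e * b * of_int (quadratic_char p c)" for c
  have "of_rat (f c) * z ^ c = of_nat (N c) * z ^ c
      - of_rat (of_int e * b) * (of_int (quadratic_char p c) * z ^ c) - (if c = 0 then of_rat a else 0)"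
    for c
    by (cases "c = 0") (simp_all add: f_def of_rat_add of_rat_diff of_rat_mult algebra_simps)
  then have "(\<Sum>c<p. of_rat (f c) * z ^ c)
      = (\<Sum>c<p. of_nat (N c) * z ^ c) - of_rat (of_int e * b) * gauss_sum - of_rat a"
    using prime_gt_0_nat[OF prime_p]
    by (simp add: sum_subtractf sum_distrib_left gauss_sum_def sum.delta)
  also have "\<dots> = 0"
    by (simp add: sum_eq r of_rat_mult)
  finally have "(\<Sum>c<p. of_rat (f c) * z ^ c) = 0" .
  then have same: "f c = f 0" if "c < p" for c
    using rat_relation_root_of_unity[OF prime_p pow_p_eq_1 ne_1] that by blast
  have "of_nat (N c) = of_nat (N 0) - a + of_int e * b * of_int (quadratic_char p c)"
    if "0 < c" "c < p" for c
    using same[OF that(2)] that(1) quadratic_char_eq_0_iff[of p 0] unfolding f_def by simp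
  with e show ?thesis
    by (rule that)
qed

end

section \<open>Finite fields and the absolute trace\<close>

lemma prime_CHAR_finite_field: "prime CHAR('a::{finite,field})"
  by (rule prime_CHAR_semidom) (simp add: finite_imp_CHAR_pos)

lemma finite_field_pow_card_minus_1:
  fixes x :: "'a::{finite,field}"
  assumes "x \<noteq> 0"
  shows "x ^ (CARD('a) - 1) = 1"
proof -
  let ?U = "UNIV - {0 :: 'a}"
  have "bij_betw (\<lambda>y. x * y) ?U ?U"
    using assms by (intro bij_betwI[of _ _ _ "\<lambda>y. y / x"]) auto
  then have "(\<Prod>y\<in>?U. x * y) = \<Prod>?U"
    by (rule prod.reindex_bij_betw)
  moreover have "(\<Prod>y\<in>?U. x * y) = x ^ card ?U * \<Prod>?U"
    by (simp add: prod.distrib)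
  moreover have "\<Prod>?U \<noteq> 0" and "card ?U = CARD('a) - 1"
    by (simp_all add: card_Diff_singleton)
  ultimately show ?thesis by simp
qed

lemma finite_field_pow_card: "(x :: 'a::{finite,field}) ^ CARD('a) = x"
proof (cases "x = 0")
  case False
  have "x ^ CARD('a) = x * x ^ (CARD('a) - 1)"
    by (simp flip: power_Suc)
  then show ?thesis
    using finite_field_pow_card_minus_1[OF False] by simp
qed simp

(* In prime characteristic these are exactly the subspaces over the prime field. *)
definition add_closed :: "'a::monoid_add set \<Rightarrow> bool" where
  "add_closed H \<longleftrightarrow> 0 \<in> H \<and> (\<forall>x\<in>H. \<forall>y\<in>H. x + y \<in> H)"

lemma add_closed_of_nat_mult:
  fixes H :: "'a::semiring_1 set"
  assumes "add_closed H" and "x \<in> H"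
  shows "of_nat m * x \<in> H"
  using assms by (induction m) (auto simp: add_closed_def distrib_right)

lemma add_closed_uminus:
  fixes H :: "'a::ring_1 set"
  assumes "prime CHAR('a)" and "add_closed H" and "x \<in> H"
  shows "- x \<in> H"
proof -
  have "(of_nat (CHAR('a) - 1) :: 'a) = - 1"
    using prime_gt_0_nat[OF assms(1)] by (simp add: of_nat_diff)
  then show ?thesis
    using add_closed_of_nat_mult[OF assms(2,3), of "CHAR('a) - 1"] by simp
qed

lemma add_closed_cancel_of_nat_mult:
  fixes H :: "'a::field set"
  assumes "prime CHAR('a)" and "add_closed H" and "of_nat d * v \<in> H" and "\<not> CHAR('a) dvd d"
  shows "v \<in> H"
proof -
  let ?p = "CHAR('a)"
  have "[d ^ (?p - 1) = 1] (mod ?p)"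
    by (rule fermat_theorem[OF assms(1,4)])
  then have "(of_nat (d ^ (?p - 1)) :: 'a) = of_nat 1"
    by (simp only: of_nat_eq_iff_cong_CHAR)
  moreover have "?p - 1 = Suc (?p - 2)"
    using prime_ge_2_nat[OF assms(1)] by simp
  ultimately have "(of_nat (d ^ (?p - 2)) :: 'a) * of_nat d = 1"
    by (simp add: power_Suc2 mult.commute)
  then have inverse: "of_nat (d ^ (?p - 2)) * (of_nat d * v) = v"
    by (simp flip: mult.assoc)
  have "of_nat (d ^ (?p - 2)) * (of_nat d * v) \<in> H"
    by (rule add_closed_of_nat_mult[OF assms(2,3)])
  then show ?thesis
    by (simp only: inverse)
qed

lemma inj_on_add_of_nat_mult:
  fixes H :: "'a::field set"
  assumes "prime CHAR('a)" and "add_closed H" and "v \<notin> H"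
  shows "inj_on (\<lambda>(h, j). h + of_nat j * v) (H \<times> {..<CHAR('a)})"
proof -
  have same_index: "j = j'"
    if "h \<in> H" "h' \<in> H" "j' \<le> j" "j < CHAR('a)" "h + of_nat j * v = h' + of_nat j' * v"
    for h h' j j'
  proof (rule ccontr)
    assume "j \<noteq> j'"
    then have "\<not> CHAR('a) dvd j - j'"
      using that(3,4) by (auto dest: dvd_imp_le)
    have "of_nat (j - j') * v = h' + - h"
      using that(3,5) by (simp add: of_nat_diff algebra_simps)
    also have "\<dots> \<in> H"
      using assms(2) that(2) add_closed_uminus[OF assms(1,2) that(1)] by (simp only: add_closed_def)
    finally show False
      using add_closed_cancel_of_nat_mult[OF assms(1,2) _ \<open>\<not> CHAR('a) dvd j - j'\<close>] assms(3)
      by blast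
  qed
  show ?thesis
  proof (rule inj_onI, clarify)
    fix h j h' j'
    assume "h \<in> H" "j < CHAR('a)" "h' \<in> H" "j' < CHAR('a)"
      and eq: "h + of_nat j * v = h' + of_nat j' * v"
    then have "j = j'"
      using same_index[of h h' j' j] same_index[of h' h j j'] by (cases "j' \<le> j") auto
    with eq show "h = h' \<and> j = j'" by simp
  qed
qed

lemma add_closed_extend:
  fixes H :: "'a::{finite,field} set"
  assumes "add_closed H" and "v \<notin> H"
  obtains H' where "add_closed H'" "card H' = CHAR('a) * card H" "insert v H \<subseteq> H'"
proof
  let ?p = "CHAR('a)"
  have p: "prime ?p" by (rule prime_CHAR_finite_field)
  define H' where "H' = (\<lambda>(h, j). h + of_nat j * v) ` (H \<times> {..<?p})"
  have mem: "h + of_nat j * v \<in> H'" if "h \<in> H" for h j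
  proof -
    have "(h, j mod ?p) \<in> H \<times> {..<?p}"
      using that prime_gt_0_nat[OF p] by simp
    moreover have "(of_nat (j mod ?p) :: 'a) = of_nat j"
      by (simp add: of_nat_eq_iff_cong_CHAR cong_def)
    ultimately show ?thesis
      unfolding H'_def by (metis (no_types, lifting) case_prod_conv image_eqI)
  qed
  have "0 \<in> H" and add: "\<And>x y. x \<in> H \<Longrightarrow> y \<in> H \<Longrightarrow> x + y \<in> H"
    using assms(1) by (auto simp: add_closed_def)
  show "add_closed H'"
    unfolding add_closed_def
  proof (intro conjI ballI)
    show "0 \<in> H'" using mem[OF \<open>0 \<in> H\<close>, of 0] by simp
    fix x y assume "x \<in> H'" "y \<in> H'"
    then obtain h j h' j' where "h \<in> H" "h' \<in> H" "x = h + of_nat j * v" "y = h' + of_nat j' * v"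
      unfolding H'_def by auto
    then show "x + y \<in> H'"
      using mem[OF add, of h h' "j + j'"] by (simp add: algebra_simps)
  qed
  show "card H' = ?p * card H"
    unfolding H'_def using inj_on_add_of_nat_mult[OF p assms]
    by (simp add: card_image card_cartesian_product)
  show "insert v H \<subseteq> H'"
    using mem[OF \<open>0 \<in> H\<close>, of 1] mem[of _ 0] by auto
qed

lemma card_finite_field_CHAR_power: "\<exists>n. CARD('a::{finite,field}) = CHAR('a) ^ n"
proof -
  have from_subspace: "\<exists>n. CARD('a) = CHAR('a) ^ n"
    if "add_closed H" "card H = CHAR('a) ^ k" for H :: "'a set" and k
    using that
  proof (induction "card (UNIV - H)" arbitrary: H k rule: less_induct)
    case less
    show ?case
    proof (cases "H = UNIV")
      case False
      then obtain v where "v \<notin> H" by auto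
      with less.prems(1) obtain H' where H': "add_closed H'" "card H' = CHAR('a) * card H" "insert v H \<subseteq> H'"
        by (rule add_closed_extend)
      have "card (UNIV - H') < card (UNIV - H)"
        using H'(3) \<open>v \<notin> H\<close> by (intro psubset_card_mono) auto
      then show ?thesis
        using less.hyps[OF _ H'(1), of "Suc k"] H'(2) less.prems(2) by simp
    qed (use less.prems in auto)
  qed
  have "add_closed {0 :: 'a}"
    by (simp add: add_closed_def)
  moreover have "card {0 :: 'a} = CHAR('a) ^ 0"
    by simp
  ultimately show ?thesis
    by (rule from_subspace)
qed

lemma card_eq_CHAR_power_field_degree:
  "CARD('a::{finite,field}) = CHAR('a) ^ field_degree TYPE('a)"
proof -
  obtain n where n: "CARD('a) = CHAR('a) ^ n"
    using card_finite_field_CHAR_power by blast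
  have "CHAR('a) > 1"
    using prime_CHAR_finite_field prime_gt_1_nat by blast
  then have "\<exists>!n. CARD('a) = CHAR('a) ^ n"
    using n by (auto simp: power_inject_exp)
  then show ?thesis
    unfolding field_degree_def by (rule theI')
qed

lemma field_degree_pos: "field_degree TYPE('a::{finite,field}) > 0"
proof (rule ccontr)
  assume "\<not> field_degree TYPE('a) > 0"
  then have "CARD('a) = 1"
    using card_eq_CHAR_power_field_degree[where 'a='a] by simp
  moreover have "card {0, 1 :: 'a} \<le> CARD('a)"
    by (rule card_mono) auto
  ultimately show False by simp
qed

lemma of_nat_pow_CHAR:
  assumes "prime CHAR('a::comm_semiring_1)"
  shows "(of_nat k :: 'a) ^ CHAR('a) = of_nat k"
proof (induction k)
  case 0
  then show ?case using prime_gt_0_nat[OF assms] by (simp add: power_0_left)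
next
  case (Suc k)
  then show ?case by (simp add: freshmans_dream[OF assms refl])
qed

lemma pow_CHAR_eq_self_imp_of_nat:
  fixes y :: "'a::idom"
  assumes "prime CHAR('a)" and "y ^ CHAR('a) = y"
  shows "\<exists>k<CHAR('a). y = of_nat k"
proof -
  let ?p = "CHAR('a)"
  define P :: "'a poly" where "P = Polynomial.monom 1 ?p - Polynomial.monom 1 1"
  have "P \<noteq> 0" and "degree P \<le> ?p"
    using prime_ge_2_nat[OF assms(1)] unfolding P_def
    by (auto simp: poly_eq_iff intro!: degree_diff_le order.trans[OF degree_monom_le] exI[of _ ?p])
  moreover have roots: "{y. poly P y = 0} = {y. y ^ ?p = y}"
    unfolding P_def by (auto simp: poly_monom)
  ultimately have fixed: "finite {y :: 'a. y ^ ?p = y}" "card {y :: 'a. y ^ ?p = y} \<le> ?p"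
    using card_poly_roots_bound[of P] poly_roots_finite[of P] by simp_all
  have sub: "of_nat ` {..<?p} \<subseteq> {y :: 'a. y ^ ?p = y}"
    using of_nat_pow_CHAR[OF assms(1)] by auto
  moreover have "card (of_nat ` {..<?p} :: 'a set) = ?p"
    by (subst card_image) (auto simp: inj_on_def of_nat_eq_iff_cong_CHAR cong_def)
  moreover have "card (of_nat ` {..<?p} :: 'a set) \<le> card {y :: 'a. y ^ ?p = y}"
    using sub fixed(1) by (rule card_mono[rotated])
  ultimately have "of_nat ` {..<?p} = {y :: 'a. y ^ ?p = y}"
    using fixed by (intro card_subset_eq) auto
  then show ?thesis
    using assms(2) by blast
qed

lemma abs_trace_0: "abs_trace (0 :: 'a::{finite,field}) = 0"
  using prime_gt_0_nat[OF prime_CHAR_finite_field[where 'a='a]] by (simp add: abs_trace_def power_0_left)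

lemma abs_trace_add: "abs_trace (x + y :: 'a::{finite,field}) = abs_trace x + abs_trace y"
  unfolding abs_trace_def
  by (simp add: freshmans_dream'[OF prime_CHAR_finite_field refl] sum.distrib)

lemma abs_trace_diff: "abs_trace (x - y :: 'a::{finite,field}) = abs_trace x - abs_trace y"
  using abs_trace_add[of "x - y" y] by (simp add: algebra_simps)

lemma abs_trace_pow_CHAR: "abs_trace (x :: 'a::{finite,field}) ^ CHAR('a) = abs_trace x"
proof -
  let ?p = "CHAR('a)" and ?n = "field_degree TYPE('a)"
  obtain m where m: "?n = Suc m"
    using field_degree_pos[where 'a='a] gr0_implies_Suc by blast
  have "abs_trace x ^ ?p = (\<Sum>i<?n. x ^ (?p ^ Suc i))"
    unfolding abs_trace_def freshmans_dream_sum[OF prime_CHAR_finite_field refl]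
    by (simp add: mult.commute flip: power_mult)
  also have "\<dots> = (\<Sum>i<m. x ^ (?p ^ Suc i)) + x ^ (?p ^ ?n)"
    by (simp add: m)
  also have "x ^ (?p ^ ?n) = x"
    using finite_field_pow_card[of x] by (simp flip: card_eq_CHAR_power_field_degree)
  also have "(\<Sum>i<m. x ^ (?p ^ Suc i)) + x = abs_trace x"
    unfolding abs_trace_def m by (subst sum.lessThan_Suc_shift) simp
  finally show ?thesis .
qed

lemma abs_trace_nat:
  "abs_trace_nat (x :: 'a::{finite,field}) < CHAR('a) \<and> of_nat (abs_trace_nat x) = abs_trace x"
proof -
  obtain k where "k < CHAR('a)" "abs_trace x = of_nat k"
    using pow_CHAR_eq_self_imp_of_nat[OF prime_CHAR_finite_field abs_trace_pow_CHAR] by blast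
  moreover have "k' = k" if "k' < CHAR('a)" "(of_nat k' :: 'a) = of_nat k" "k < CHAR('a)" for k k'
    using that by (simp add: of_nat_eq_iff_cong_CHAR cong_def)
  ultimately have "\<exists>!k. k < CHAR('a) \<and> of_nat k = abs_trace x"
    by metis
  then show ?thesis
    unfolding abs_trace_nat_def by (rule theI')
qed

lemma abs_trace_nat_eq_0_iff: "abs_trace_nat (x :: 'a::{finite,field}) = 0 \<longleftrightarrow> abs_trace x = 0"
  using abs_trace_nat[of x] by (metis of_nat_0 of_nat_eq_0_iff_char_dvd dvd_imp_le
      neq0_conv not_less)

section \<open>Nondegenerate exponents\<close>

lemma finite_field_pow_reduce:
  fixes x :: "'a::{finite,field}"
  assumes "m > 0"
  shows "x ^ m = x ^ ((m - 1) mod (CARD('a) - 1) + 1)"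
proof (cases "x = 0")
  case False
  let ?N = "CARD('a) - 1"
  have "x ^ (m - 1) = (x ^ ?N) ^ ((m - 1) div ?N) * x ^ ((m - 1) mod ?N)"
    by (simp only: mult_div_mod_eq flip: power_mult power_add)
  then have "x ^ (m - 1) = x ^ ((m - 1) mod ?N)"
    using finite_field_pow_card_minus_1[OF False] by simp
  moreover have "m = Suc (m - 1)"
    using assms by simp
  ultimately show ?thesis
    by (metis power_Suc2 Suc_eq_plus1)
qed (use assms in \<open>simp add: power_0_left\<close>)

lemma CHAR_power_less_card:
  assumes "i < field_degree TYPE('a::{finite,field})"
  shows "CHAR('a) ^ i < CARD('a)"
  unfolding card_eq_CHAR_power_field_degree
  using assms prime_gt_1_nat[OF prime_CHAR_finite_field] by (rule power_strict_increasing)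

lemma CHAR_power_less_card_minus_1:
  assumes "CARD('a::{finite,field}) > 2" and "i < field_degree TYPE('a)"
  shows "CHAR('a) ^ i < CARD('a) - 1"
proof -
  have "CHAR('a) ^ Suc i \<le> CARD('a)"
    unfolding card_eq_CHAR_power_field_degree
    using assms(2) prime_gt_0_nat[OF prime_CHAR_finite_field[where 'a='a]]
    by (intro power_increasing) auto
  moreover have "2 * CHAR('a) ^ i \<le> CHAR('a) ^ Suc i"
    using prime_ge_2_nat[OF prime_CHAR_finite_field[where 'a='a]] by simp
  ultimately show ?thesis
    using assms(1) by linarith
qed

(* The exponent s p^i is reduced into {1, ..., q - 1}: this does not change x^(s p^i) on K,
   and it keeps the degree below q. *)
definition trace_poly :: "nat \<Rightarrow> 'a::{finite,field} \<Rightarrow> 'a poly" where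
  "trace_poly s u = (\<Sum>i<field_degree TYPE('a).
     Polynomial.monom 1 ((s * CHAR('a) ^ i - 1) mod (CARD('a) - 1) + 1)
     - Polynomial.monom (u ^ CHAR('a) ^ i) (CHAR('a) ^ i))"

lemma poly_trace_poly:
  fixes u :: "'a::{finite,field}"
  assumes "s > 0"
  shows "poly (trace_poly s u) x = abs_trace (x ^ s - u * x)"
proof -
  let ?p = "CHAR('a)" and ?n = "field_degree TYPE('a)"
  have reduce: "x ^ ((s * ?p ^ i - 1) mod (CARD('a) - 1) + 1) = x ^ (s * ?p ^ i)" for i
    using finite_field_pow_reduce[of "s * ?p ^ i" x] assms
      prime_gt_0_nat[OF prime_CHAR_finite_field[where 'a='a]] by simp
  have "poly (trace_poly s u) x = (\<Sum>i<?n. x ^ (s * ?p ^ i)) - (\<Sum>i<?n. u ^ ?p ^ i * x ^ ?p ^ i)"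
    unfolding trace_poly_def by (simp only: poly_sum poly_diff poly_monom reduce sum_subtractf mult_1)
  also have "\<dots> = abs_trace (x ^ s) - abs_trace (u * x)"
    by (simp add: abs_trace_def power_mult power_mult_distrib)
  also have "\<dots> = abs_trace (x ^ s - u * x)"
    by (rule abs_trace_diff[symmetric])
  finally show ?thesis .
qed

lemma degree_trace_poly: "degree (trace_poly s (u :: 'a::{finite,field})) \<le> CARD('a) - 1"
proof -
  have "CARD('a) - 1 > 0"
    using prime_gt_1_nat[OF prime_CHAR_finite_field[where 'a='a]]
      dvd_imp_le[OF CHAR_dvd_CARD[where 'a='a]] by simp
  then have "(m - 1) mod (CARD('a) - 1) + 1 \<le> CARD('a) - 1" for m
    using mod_less_divisor[of "CARD('a) - 1" "m - 1"] by linarith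
  moreover have "CHAR('a) ^ i \<le> CARD('a) - 1" if "i < field_degree TYPE('a)" for i
    using CHAR_power_less_card[OF that] by linarith
  ultimately show ?thesis
    unfolding trace_poly_def
    by (intro degree_sum_le degree_diff_le order.trans[OF degree_monom_le]) auto
qed

lemma coeff_trace_poly_nondegenerate:
  fixes u :: "'a::{finite,field}"
  assumes "CARD('a) > 2" and "s > 0" and "coprime s (CARD('a) - 1)"
    and "\<not> degenerate TYPE('a) s"
  shows "Polynomial.coeff (trace_poly s u) ((s - 1) mod (CARD('a) - 1) + 1) = 1"
proof -
  let ?p = "CHAR('a)" and ?n = "field_degree TYPE('a)" and ?N = "CARD('a) - 1"
  define e where "e m = (m - 1) mod ?N + 1" for m
  have p: "?p \<ge> 2"
    using prime_ge_2_nat[OF prime_CHAR_finite_field] .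
  have e_cong: "[e m = m] (mod ?N)" if "m > 0" for m
    unfolding e_def cong_def using that by (metis Suc_diff_1 Suc_eq_plus1 mod_Suc_eq)
  have "e (s * ?p ^ i) \<noteq> e s" if "0 < i" "i < ?n" for i
  proof
    assume "e (s * ?p ^ i) = e s"
    then have "[s * ?p ^ i = s * 1] (mod ?N)"
      using e_cong[of s] e_cong[of "s * ?p ^ i"] assms(2) p by (simp add: cong_def)
    then have "[?p ^ i = 1] (mod ?N)"
      using cong_mult_lcancel_nat[OF assms(3)] by blast
    then have "?p ^ i = 1"
      using CHAR_power_less_card_minus_1[OF assms(1) that(2)] assms(1)
      by (simp add: cong_def)
    then show False
      using that(1) p by simp
  qed
  moreover have "?p ^ i \<noteq> e s" for i
  proof
    assume "?p ^ i = e s"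
    then have "[s = ?p ^ i] (mod ?N)"
      using e_cong[OF assms(2)] by (simp add: cong_sym)
    then show False
      using assms(4) unfolding degenerate_def by blast
  qed
  ultimately have "Polynomial.coeff (trace_poly s u) (e s) = (\<Sum>i<?n. if i = 0 then 1 else 0)"
    unfolding trace_poly_def coeff_sum e_def [symmetric]
    by (intro sum.cong refl) (auto simp: coeff_monom)
  also have "\<dots> = 1"
    using field_degree_pos[where 'a='a] by simp
  finally show ?thesis
    by (simp add: e_def)
qed

lemma exists_abs_trace_nonzero:
  fixes u :: "'a::{finite,field}"
  assumes "CARD('a) > 2" and "s > 0" and "coprime s (CARD('a) - 1)"
    and "\<not> degenerate TYPE('a) s"
  shows "\<exists>x. abs_trace (x ^ s - u * x) \<noteq> 0"
proof (rule ccontr)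
  assume "\<nexists>x. abs_trace (x ^ s - u * x) \<noteq> 0"
  then have "{x. poly (trace_poly s u) x = 0} = UNIV"
    by (simp add: poly_trace_poly[OF assms(2)])
  moreover have "trace_poly s u \<noteq> 0"
    using coeff_trace_poly_nondegenerate[OF assms, where u = u] by auto
  then have "card {x. poly (trace_poly s u) x = 0} \<le> CARD('a) - 1"
    using card_poly_roots_bound degree_trace_poly order.trans by blast
  ultimately show False
    using assms(1) by simp
qed

section \<open>Counting the values of the trace\<close>

definition zeta :: "nat \<Rightarrow> complex" where
  "zeta p = exp (2 * of_real pi * \<i> / of_nat p)"

lemma zeta_pow: "zeta p ^ k = exp (2 * of_real pi * \<i> * of_nat k / of_nat p)"
  unfolding zeta_def by (simp flip: exp_of_nat_mult add: field_simps)

lemma prime_root_of_unity_zeta: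
  assumes "prime p"
  shows "prime_root_of_unity p (zeta p)"
proof
  have p: "real p > 0"
    using prime_gt_0_nat[OF assms] by simp
  fix k
  have "zeta p ^ k = 1 \<longleftrightarrow> (\<exists>n::int. 2 * pi * real k / real p = of_int (2 * n) * pi)"
    by (simp add: zeta_pow exp_eq_1 flip: Im_divide_of_real)
  also have "\<dots> \<longleftrightarrow> (\<exists>n::int. int k = n * int p)"
    using p by (intro ex_cong1) (simp add: field_simps flip: of_int_eq_iff[where 'a = real])
  also have "\<dots> \<longleftrightarrow> p dvd k"
    by (metis dvd_def int_dvd_int_iff mult.commute)
  finally show "zeta p ^ k = 1 \<longleftrightarrow> p dvd k" .
qed (rule assms)

lemma psi_eq_zeta_pow: "psi (y :: 'a::{finite,field}) = zeta CHAR('a) ^ abs_trace_nat y"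
  unfolding psi_def zeta_pow by simp

lemma sum_by_fibres:
  fixes T :: "'b \<Rightarrow> nat" and F :: "nat \<Rightarrow> 'c::comm_semiring_1"
  assumes "finite A" and "\<And>x. x \<in> A \<Longrightarrow> T x < n"
  shows "(\<Sum>x\<in>A. F (T x)) = (\<Sum>c<n. of_nat (card {x\<in>A. T x = c}) * F c)"
proof -
  have "(\<Sum>x\<in>A. F (T x)) = (\<Sum>x\<in>A. \<Sum>c<n. if T x = c then F c else 0)"
    using assms(2) by (intro sum.cong refl) simp
  also have "\<dots> = (\<Sum>c<n. \<Sum>x\<in>A. if T x = c then F c else 0)"
    by (rule sum.swap)
  also have "\<dots> = (\<Sum>c<n. of_nat (card {x\<in>A. T x = c}) * F c)"
    using assms(1) by (simp add: sum.If_cases Int_def conj_commute)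
  finally show ?thesis .
qed

definition trace_count :: "nat \<Rightarrow> 'a::{finite,field} \<Rightarrow> nat \<Rightarrow> nat" where
  "trace_count s u c = card {x. abs_trace_nat (x ^ s - u * x) = c}"

lemma weil_sum_eq_sum_trace_count:
  "weil_sum s (u :: 'a::{finite,field})
     = (\<Sum>c<CHAR('a). of_nat (trace_count s u c) * zeta CHAR('a) ^ c)"
  unfolding weil_sum_def psi_eq_zeta_pow trace_count_def
  using sum_by_fibres[of UNIV "\<lambda>x. abs_trace_nat (x ^ s - u * x)" "CHAR('a)" "\<lambda>c. zeta CHAR('a) ^ c"]
  by (simp add: abs_trace_nat)

lemma sum_trace_count: "(\<Sum>c<CHAR('a). trace_count s (u :: 'a::{finite,field}) c) = CARD('a)"
  unfolding trace_count_def
  using sum_by_fibres[of UNIV "\<lambda>x::'a. abs_trace_nat (x ^ s - u * x)" "CHAR('a)" "\<lambda>_. 1 :: nat"]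
  by (simp add: abs_trace_nat)

lemma trace_count_0_pos:
  assumes "s > 0"
  shows "trace_count s (u :: 'a::{finite,field}) 0 > 0"
proof -
  have "abs_trace_nat ((0 :: 'a) ^ s - u * 0) = 0"
    using assms by (simp add: abs_trace_nat_eq_0_iff abs_trace_0 power_0_left)
  then have "{x :: 'a. abs_trace_nat (x ^ s - u * x) = 0} \<noteq> {}"
    by blast
  then show ?thesis
    unfolding trace_count_def by (simp add: card_gt_0_iff)
qed

lemma trace_count_0_less_card:
  fixes u :: "'a::{finite,field}"
  assumes "CARD('a) > 2" and "s > 0" and "coprime s (CARD('a) - 1)"
    and "\<not> degenerate TYPE('a) s"
  shows "trace_count s u 0 < CARD('a)"
proof -
  obtain x :: 'a where "abs_trace (x ^ s - u * x) \<noteq> 0"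
    using exists_abs_trace_nonzero[OF assms] by blast
  then have "{y :: 'a. abs_trace_nat (y ^ s - u * y) = 0} \<subset> UNIV"
    by (auto simp: abs_trace_nat_eq_0_iff)
  then show ?thesis
    unfolding trace_count_def by (simp add: psubset_card_mono)
qed

section \<open>The coefficients of the Weil sum\<close>

lemma prime_mult_square_ne_square:
  fixes x y :: int
  assumes "prime p" and "y \<noteq> 0"
  shows "x\<^sup>2 \<noteq> p * y\<^sup>2"
proof
  assume eq: "x\<^sup>2 = p * y\<^sup>2"
  then have "x \<noteq> 0"
    using assms by auto
  have m1: "multiplicity p (x\<^sup>2) = 2 * multiplicity p x"
    using prime_elem_multiplicity_power_distrib[OF prime_imp_prime_elem[OF assms(1)] \<open>x \<noteq> 0\<close>]
    by simp
  have m2: "multiplicity p (p * y\<^sup>2) = Suc (multiplicity p (y\<^sup>2))"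
    using assms by (intro multiplicity_times_same) (auto dest: not_prime_unit)
  have m3: "multiplicity p (y\<^sup>2) = 2 * multiplicity p y"
    using prime_elem_multiplicity_power_distrib[OF prime_imp_prime_elem[OF assms(1)] assms(2)]
    by simp
  have "Suc (2 * multiplicity p y) = 2 * multiplicity p x"
    using arg_cong[OF eq, of "multiplicity p"] m1 m2 m3 by linarith
  then show False
    using Suc_double_not_eq_double by blast
qed

lemma eq_half_int_sqrt_prime_iff:
  fixes I J I' J' :: int
  assumes "prime p" and w: "w = (of_int I' + of_int J' * complex_of_real (sqrt (real p))) / 2"
  shows "w = (of_int I + of_int J * complex_of_real (sqrt (real p))) / 2 \<longleftrightarrow> I = I' \<and> J = J'"
proof
  assume "w = (of_int I + of_int J * complex_of_real (sqrt (real p))) / 2"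
  then have "of_int I + of_int J * complex_of_real (sqrt (real p))
      = of_int I' + of_int J' * complex_of_real (sqrt (real p))"
    using w by (metis divide_cancel_right zero_neq_numeral)
  then have "complex_of_real (of_int I + of_int J * sqrt (real p))
      = complex_of_real (of_int I' + of_int J' * sqrt (real p))"
    by simp
  then have "real_of_int I + real_of_int J * sqrt (real p) = real_of_int I' + real_of_int J' * sqrt (real p)"
    by (simp only: of_real_eq_iff)
  then have real_eq: "real_of_int (I - I') = real_of_int (J' - J) * sqrt (real p)"
    by (simp add: algebra_simps)
  then have "real_of_int ((I - I')\<^sup>2) = real_of_int (int p * (J' - J)\<^sup>2)"
    by (simp add: power_mult_distrib)
  then have "(I - I')\<^sup>2 = int p * (J' - J)\<^sup>2"
    by (simp only: of_int_eq_iff)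
  then have "J = J'"
    using prime_mult_square_ne_square[of "int p" "J' - J" "I - I'"] assms(1) by auto
  then show "I = I' \<and> J = J'"
    using real_eq by simp
qed (use w in simp)

lemma sum_quadratic_counts:
  fixes N :: "nat \<Rightarrow> nat" and K t :: rat
  assumes "prime p" and "p > 2"
    and "\<And>c. 0 < c \<Longrightarrow> c < p \<Longrightarrow> of_nat (N c) = K + t * of_int (quadratic_char p c)"
  shows "(\<Sum>c<p. of_nat (N c)) = of_nat (N 0) + of_nat (p - 1) * K"
proof -
  have "(\<Sum>c<p. of_nat (N c)) = of_nat (N 0) + (\<Sum>c\<in>{1..<p}. of_nat (N c) :: rat)"
    using assms(2) by (simp add: lessThan_atLeast0 sum.atLeast_Suc_lessThan)
  also have "\<dots> = of_nat (N 0) + (\<Sum>c\<in>{1..<p}. K + t * of_int (quadratic_char p c))"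
    using assms(3) by (intro arg_cong2[of _ _ _ _ "(+)"] sum.cong) auto
  also have "\<dots> = of_nat (N 0) + of_nat (p - 1) * K"
    using sum_quadratic_char_units[OF assms(1,2)]
    by (simp add: sum.distrib flip: sum_distrib_left of_int_sum)
  finally show ?thesis .
qed

lemma trace_count_affine_quadratic_char:
  fixes s :: nat and u :: "'a::{finite,field}" and a b :: rat
  defines "p \<equiv> CHAR('a)"
  assumes "p mod 4 = 1"
    and "weil_sum s u = of_rat a + of_rat b * complex_of_real (sqrt (real p))"
  obtains e :: int where "e = 1 \<or> e = -1"
    and "\<And>c. 0 < c \<Longrightarrow> c < p \<Longrightarrow> of_nat (trace_count s u c)
           = of_nat (trace_count s u 0) - a + of_int e * b * of_int (quadratic_char p c)"
proof -
  interpret prime_root_of_unity p "zeta p"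
    unfolding p_def by (rule prime_root_of_unity_zeta[OF prime_CHAR_finite_field])
  have "(complex_of_real (sqrt (real p)))\<^sup>2 = of_nat p"
    by (simp flip: of_real_power)
  moreover have "(\<Sum>c<p. of_nat (trace_count s u c) * zeta p ^ c)
      = of_rat a + of_rat b * complex_of_real (sqrt (real p))"
    using assms(3) weil_sum_eq_sum_trace_count[of s u] unfolding p_def by simp
  ultimately show ?thesis
    using that count_eq_affine_quadratic_char[OF assms(2)] by blast
qed

(* n1 and ng are the common values of trace_count s u c on the nonzero squares c and on the
   nonsquares c, respectively. *)
lemma weil_sum_half_integral:
  fixes s :: nat and u :: "'a::{finite,field}" and a b :: rat
  defines "p \<equiv> CHAR('a)" and "N0 \<equiv> trace_count s u 0"
  assumes "p mod 4 = 1"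
    and "weil_sum s u = of_rat a + of_rat b * complex_of_real (sqrt (real p))"
  obtains n1 ng :: nat and e :: int
  where "e = 1 \<or> e = -1"
    and "weil_sum s u = (of_int (2 * int N0 - int n1 - int ng)
           + of_int (e * (int n1 - int ng)) * complex_of_real (sqrt (real p))) / 2"
    and "int (p - 1) * (int n1 + int ng) = 2 * (int CARD('a) - int N0)"
proof -
  have p_prime: "prime p"
    unfolding p_def by (rule prime_CHAR_finite_field)
  have p_gt_2: "p > 2"
    using assms(3) prime_ge_2_nat[OF p_prime] by (cases "p = 2") auto
  obtain e :: int where e: "e = 1 \<or> e = -1"
    and N: "\<And>c. 0 < c \<Longrightarrow> c < p \<Longrightarrow>
      of_nat (trace_count s u c) = of_nat N0 - a + of_int e * b * of_int (quadratic_char p c)"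
    using trace_count_affine_quadratic_char assms(3,4) unfolding p_def N0_def by blast
  obtain g where g: "g < p" "quadratic_char p g = -1"
    using exists_quadratic_nonresidue[OF p_prime p_gt_2] by blast
  then have "g > 0"
    using quadratic_char_eq_0_iff[of p 0] by (cases "g = 0") auto
  define n1 ng where "n1 = trace_count s u 1" and "ng = trace_count s u g"
  have n1: "of_nat n1 = of_nat N0 - a + of_int e * b"
    using N[of 1] p_gt_2 quadratic_char_1[OF p_prime] unfolding n1_def by simp
  have ng: "of_nat ng = of_nat N0 - a - of_int e * b"
    using N[OF \<open>g > 0\<close> g(1)] g(2) unfolding ng_def by simp
  show ?thesis
  proof (rule that[OF e])
    have "2 * a = of_int (2 * int N0 - int n1 - int ng)" and "2 * b = of_int (e * (int n1 - int ng))"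
      using n1 ng e by auto
    then have a: "of_int (2 * int N0 - int n1 - int ng) = 2 * (of_rat a :: complex)"
      and b: "of_int (e * (int n1 - int ng)) = 2 * (of_rat b :: complex)"
      by (metis of_rat_mult of_rat_numeral_eq of_rat_of_int_eq)+
    show "weil_sum s u = (of_int (2 * int N0 - int n1 - int ng)
        + of_int (e * (int n1 - int ng)) * complex_of_real (sqrt (real p))) / 2"
      unfolding assms(4) a b by simp
    have "of_nat CARD('a) = (\<Sum>c<p. of_nat (trace_count s u c) :: rat)"
      using sum_trace_count[of s u] unfolding p_def by (metis of_nat_sum)
    also have "\<dots> = of_nat N0 + of_nat (p - 1) * (of_nat N0 - a)"
      unfolding N0_def by (rule sum_quadratic_counts[OF p_prime p_gt_2 N[unfolded N0_def]])
    also have "\<dots> = of_nat N0 + of_nat (p - 1) * ((of_nat n1 + of_nat ng) / 2)"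
      using n1 ng by simp
    finally have "of_int (int (p - 1) * (int n1 + int ng)) = (of_int (2 * (int CARD('a) - int N0)) :: rat)"
      by (simp add: algebra_simps)
    then show "int (p - 1) * (int n1 + int ng) = 2 * (int CARD('a) - int N0)"
      by (simp only: of_int_eq_iff)
  qed
qed

lemma weil_coefficients_cong_mod_2:
  fixes n0 n1 ng :: nat and e :: int
  defines "I \<equiv> 2 * int n0 - int n1 - int ng" and "J \<equiv> e * (int n1 - int ng)"
  assumes "e = 1 \<or> e = -1"
  shows "[I = J] (mod 2)"
proof -
  have "2 dvd I - J"
    using assms(3) unfolding I_def J_def by (auto simp: algebra_simps)
  then show ?thesis
    by (simp add: cong_iff_dvd_diff)
qed

lemma prime_dvd_weil_coefficient:
  fixes n0 n1 ng q :: nat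
  defines "I \<equiv> 2 * int n0 - int n1 - int ng"
  assumes "prime p" and "p dvd q"
    and "int (p - 1) * (int n1 + int ng) = 2 * (int q - int n0)"
  shows "int p dvd I"
proof -
  have "int (p - 1) * I = int p * (2 * int n0) - 2 * int q"
    using assms(4) prime_gt_0_nat[OF assms(2)] unfolding I_def by (simp add: algebra_simps of_nat_diff)
  moreover have "int p dvd int p * (2 * int n0) - 2 * int q"
    using assms(3) by simp
  ultimately have "int p dvd int (p - 1) * I"
    by simp
  moreover have "\<not> p dvd p - 1"
    using prime_gt_1_nat[OF assms(2)] by (auto dest: dvd_imp_le)
  moreover have "prime (int p)"
    using assms(2) by simp
  ultimately show ?thesis
    by (simp add: prime_dvd_mult_iff)
qed

lemma weil_coefficients_bounds:
  fixes n0 n1 ng q :: nat and e :: int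
  defines "I \<equiv> 2 * int n0 - int n1 - int ng" and "J \<equiv> e * (int n1 - int ng)"
  assumes "p \<ge> 3" and "0 < n0" and "n0 < q" and "e = 1 \<or> e = -1"
    and "int (p - 1) * (int n1 + int ng) = 2 * (int q - int n0)"
  shows "- real q < - 2 * (real q - 1) / (real p - 1)
    \<and> - 2 * (real q - 1) / (real p - 1) < real_of_int I
    \<and> real_of_int I < 2 * real q
    \<and> \<bar>real_of_int J\<bar> \<le> 2 * (real q - 1) / (real p - 1)
    \<and> 2 * (real q - 1) / (real p - 1) < real q"
proof -
  define B where "B = 2 * (real q - 1) / (real p - 1)"
  have minus: "- 2 * (real q - 1) / (real p - 1) = - B"
    unfolding B_def by (simp add: minus_divide_left)
  have p: "real p - 1 \<ge> 2"
    using assms(3) by simp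
  have "(real p - 1) * (real n1 + real ng) = 2 * (real q - real n0)"
    using arg_cong[OF assms(7), of real_of_int] assms(3) by (simp add: of_nat_diff)
  then have "(real n1 + real ng) * (real p - 1) \<le> 2 * (real q - 1)"
    using assms(4) by (simp add: mult.commute[of "real n1 + real ng"])
  then have "real n1 + real ng \<le> B"
    unfolding B_def using p by (simp only: pos_le_divide_eq)
  moreover have "real q * 2 \<le> real q * (real p - 1)"
    using p by (intro mult_left_mono) auto
  then have "2 * (real q - 1) < real q * (real p - 1)"
    by argo
  then have "B < real q"
    unfolding B_def using p by (simp only: pos_divide_less_eq)
  ultimately show ?thesis
    using assms(4-6) unfolding minus B_def[symmetric] I_def J_def by (auto simp: abs_mult)
qed

lemma CHAR_le_CARD: "CHAR('a::{finite,field}) \<le> CARD('a)"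
  using CHAR_dvd_CARD[where 'a='a] by (rule dvd_imp_le) simp

theorem lemma3p6:
  fixes s :: nat and u :: "'a::{finite,field}"
  defines "p \<equiv> CHAR('a)" and "q \<equiv> CARD('a)"
  assumes "prime p" and "p mod 4 = 1"
    and "s > 0" and "coprime s (q - 1)"
    and "\<exists>a b :: rat. weil_sum s u = of_rat a + of_rat b * complex_of_real (sqrt (real p))"
  shows "(\<exists>!IJ :: int \<times> int. weil_sum s u = (of_int (fst IJ) + of_int (snd IJ) * complex_of_real (sqrt (real p))) / 2)
    \<and> (\<forall>I J :: int. weil_sum s u = (of_int I + of_int J * complex_of_real (sqrt (real p))) / 2 \<longrightarrow>
         [I = J] (mod 2) \<and> int p dvd I \<and>
         (\<not> degenerate TYPE('a) s \<longrightarrow>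
            - real q < - 2 * (real q - 1) / (real p - 1)
            \<and> - 2 * (real q - 1) / (real p - 1) < real_of_int I
            \<and> real_of_int I < 2 * real q
            \<and> \<bar>real_of_int J\<bar> \<le> 2 * (real q - 1) / (real p - 1)
            \<and> 2 * (real q - 1) / (real p - 1) < real q))"
proof -
  define N0 where "N0 = trace_count s u 0"
  obtain n1 ng e where e: "e = 1 \<or> e = -1"
    and W: "weil_sum s u = (of_int (2 * int N0 - int n1 - int ng)
              + of_int (e * (int n1 - int ng)) * complex_of_real (sqrt (real p))) / 2"
    and count: "int (p - 1) * (int n1 + int ng) = 2 * (int q - int N0)"
    using assms(4,7) weil_sum_half_integral unfolding p_def q_def N0_def by metis
  have "p \<ge> 5"
    using assms(3,4) prime_ge_2_nat[of p] by presburger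
  then have "q > 2"
    using CHAR_le_CARD[where 'a='a] unfolding p_def q_def by simp
  have "0 < N0" and nondegenerate: "\<not> degenerate TYPE('a) s \<Longrightarrow> N0 < q"
    using trace_count_0_pos trace_count_0_less_card \<open>q > 2\<close> assms(5,6)
    unfolding N0_def q_def by blast+
  show ?thesis
    unfolding eq_half_int_sqrt_prime_iff[OF assms(3) W]
    using weil_coefficients_cong_mod_2[OF e] prime_dvd_weil_coefficient[OF assms(3) _ count]
      weil_coefficients_bounds[OF _ \<open>0 < N0\<close> nondegenerate e count] \<open>p \<ge> 5\<close>
      CHAR_dvd_CARD[where 'a='a]
    unfolding p_def q_def by auto
qed

end
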